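(* Let $p(x)=x^3-a_2x^2+a_1x-a_0$ with real coefficients $a_0,a_1,a_2>0$, and let $\alpha=\min\{a_2,a_0/a_1\}$ and $\beta=\max\{a_2,a_0/a_1\}$. Then $p(x)<0$ for all $x\in(0,\alpha)$ and $p(x)>0$ for all $x>\beta$. *)

theory Defs
  imports Complex_Main
begin

end

theory Submission
  imports Defs
begin

(* Split p x = x^2 (x - a2) + (a1 x - a0): below both a2 and a0/a1 the two summands are
   negative, above both of them they are positive. *)

lemma cubic_split:
  fixes x a0 a1 a2 :: "'a::comm_ring_1"
  shows "x ^ 3 - a2 * x ^ 2 + a1 * x - a0 = x ^ 2 * (x - a2) + (a1 * x - a0)"
  by (simp add: algebra_simps power2_eq_square power3_eq_cube)

lemma cubic_neg_below_bounds:
  fixes x a0 a1 a2 :: "'a::linordered_field"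
  assumes "0 < a1" "0 < x" "x < a2" "x < a0 / a1"
  shows "x ^ 3 - a2 * x ^ 2 + a1 * x - a0 < 0"
proof -
  have "x ^ 2 * (x - a2) < 0"
    using assms by (simp add: mult_pos_neg)
  moreover have "a1 * x < a0"
    using assms by (simp add: pos_less_divide_eq mult.commute)
  ultimately show ?thesis
    by (simp add: cubic_split)
qed

lemma cubic_pos_above_bounds:
  fixes x a0 a1 a2 :: "'a::linordered_field"
  assumes "0 < a1" "0 \<le> a2" "a2 < x" "a0 / a1 < x"
  shows "0 < x ^ 3 - a2 * x ^ 2 + a1 * x - a0"
proof -
  have "0 < x ^ 2 * (x - a2)"
    using assms by simp
  moreover have "a0 < a1 * x"
    using assms by (simp add: pos_divide_less_eq mult.commute)
  ultimately show ?thesis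
    by (simp add: cubic_split)
qed

theorem lemma2:
  fixes a0 a1 a2 :: real
  assumes "a0 > 0" "a1 > 0" "a2 > 0"
  defines "p \<equiv> (\<lambda>x::real. x ^ 3 - a2 * x ^ 2 + a1 * x - a0)"
    and "\<alpha> \<equiv> min a2 (a0 / a1)"
    and "\<beta> \<equiv> max a2 (a0 / a1)"
  shows "(\<forall>x. 0 < x \<and> x < \<alpha> \<longrightarrow> p x < 0) \<and> (\<forall>x. x > \<beta> \<longrightarrow> p x > 0)"
  using assms cubic_neg_below_bounds[of a1 _ a2 a0] cubic_pos_above_bounds[of a1 a2 _ a0]
  unfolding p_def \<alpha>_def \<beta>_def by auto

end
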